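(* Let $\mathfrak g=\mathfrak k\oplus\mathfrak m$ be a Pauli-spanned Cartan decomposition, and let $b_1\neq b_2$ be two commuting Pauli strings in $\tilde{\mathfrak m}$ lying in the same connected component of the frustration graph of $\mathfrak g$. Then $|\tilde{\mathfrak k}^1_2|=|\tilde{\mathfrak k}^2_1|$.
   Context: Pauli strings on $n$ qubits are tensor products of $I,X,Y,Z$, not all identity; two Pauli strings either commute or anticommute. A Pauli-spanned Cartan decomposition is $\mathfrak g=\mathfrak k\oplus\mathfrak m\subseteq\mathfrak{su}(2^n)$ with $\mathfrak k=\mathrm{span}_{i\mathbb R}\tilde{\mathfrak k}$, $\mathfrak m=\mathrm{span}_{i\mathbb R}\tilde{\mathfrak m}$, $\mathfrak g=\mathrm{span}_{i\mathbb R}\tilde{\mathfrak g}$ with $\tilde{\mathfrak g}=\tilde{\mathfrak k}\sqcup\tilde{\mathfrak m}$ the set of all Pauli strings (up to phase) $\sigma$ with $i\sigma\in\mathfrak g$, and $[\mathfrak k,\mathfrak k]\subseteq\mathfrak k$, $[\mathfrak m,\mathfrak m]\subseteq\mathfrak k$, $[\mathfrak k,\mathfrak m]\subseteq\mathfrak m$. The frustration graph of $\mathfrak g$ has vertex set $\tilde{\mathfrak g}$, with edges between anticommuting pairs. For Pauli strings $b_1,b_2,\dots$ and disjoint index lists, $\tilde{\mathfrak k}^{i_1i_2\dots}_{j_1j_2\dots}$ is the set of $k\in\tilde{\mathfrak k}$ anticommuting with every $b_{i_p}$ and commuting with every $b_{j_q}$ (no condition on other indices). *)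

theory Defs
  imports Main
begin

text \<open>Single-qubit Paulis (up to phase).\<close>
datatype pauli = PI | PX | PY | PZ

fun pmul :: "pauli \<Rightarrow> pauli \<Rightarrow> pauli" where
  "pmul PI a = a"
| "pmul a PI = a"
| "pmul PX PX = PI" | "pmul PY PY = PI" | "pmul PZ PZ = PI"
| "pmul PX PY = PZ" | "pmul PY PX = PZ"
| "pmul PY PZ = PX" | "pmul PZ PY = PX"
| "pmul PZ PX = PY" | "pmul PX PZ = PY"

definition pauli_strings :: "nat \<Rightarrow> (nat \<Rightarrow> pauli) set" where
  "pauli_strings n = {p. (\<forall>i\<ge>n. p i = PI) \<and> (\<exists>i<n. p i \<noteq> PI)}"

definition smul :: "(nat \<Rightarrow> pauli) \<Rightarrow> (nat \<Rightarrow> pauli) \<Rightarrow> (nat \<Rightarrow> pauli)" where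
  "smul p q = (\<lambda>i. pmul (p i) (q i))"

definition anticommute :: "nat \<Rightarrow> (nat \<Rightarrow> pauli) \<Rightarrow> (nat \<Rightarrow> pauli) \<Rightarrow> bool" where
  "anticommute n p q \<longleftrightarrow> odd (card {i. i < n \<and> p i \<noteq> PI \<and> q i \<noteq> PI \<and> p i \<noteq> q i})"

text \<open>[span_iR A, span_iR B] \<subseteq> span_iR C for sets of Pauli strings: for
  Pauli strings, [i a, i b] = 0 if a,b commute and is a nonzero multiple of i(ab)
  if they anticommute; distinct Pauli strings are linearly independent.\<close>
definition bracket_in :: "nat \<Rightarrow> (nat \<Rightarrow> pauli) set \<Rightarrow> (nat \<Rightarrow> pauli) set \<Rightarrow> (nat \<Rightarrow> pauli) set \<Rightarrow> bool" where
  "bracket_in n A B C \<longleftrightarrow> (\<forall>a\<in>A. \<forall>b\<in>B. anticommute n a b \<longrightarrow> smul a b \<in> C)"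

text \<open>Pauli-spanned Cartan decomposition g = k \<oplus> m, given by the Pauli bases K, M.\<close>
definition pauli_cartan :: "nat \<Rightarrow> (nat \<Rightarrow> pauli) set \<Rightarrow> (nat \<Rightarrow> pauli) set \<Rightarrow> bool" where
  "pauli_cartan n K M \<longleftrightarrow> K \<subseteq> pauli_strings n \<and> M \<subseteq> pauli_strings n \<and> K \<inter> M = {}
     \<and> bracket_in n K K K \<and> bracket_in n M M K \<and> bracket_in n K M M"

definition frustration_edge :: "nat \<Rightarrow> (nat \<Rightarrow> pauli) set \<Rightarrow> (nat \<Rightarrow> pauli) \<Rightarrow> (nat \<Rightarrow> pauli) \<Rightarrow> bool" where
  "frustration_edge n G a b \<longleftrightarrow> a \<in> G \<and> b \<in> G \<and> anticommute n a b"

definition same_component :: "nat \<Rightarrow> (nat \<Rightarrow> pauli) set \<Rightarrow> (nat \<Rightarrow> pauli) \<Rightarrow> (nat \<Rightarrow> pauli) \<Rightarrow> bool" where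
  "same_component n G a b \<longleftrightarrow> a \<in> G \<and> b \<in> G \<and> (frustration_edge n G)\<^sup>*\<^sup>* a b"

text \<open>k^{A}_{B}: elements of K anticommuting with all of A and commuting with all of B.\<close>
definition k_sub :: "nat \<Rightarrow> (nat \<Rightarrow> pauli) set \<Rightarrow> (nat \<Rightarrow> pauli) set \<Rightarrow> (nat \<Rightarrow> pauli) set \<Rightarrow> (nat \<Rightarrow> pauli) set" where
  "k_sub n K A B = {k \<in> K. (\<forall>a\<in>A. anticommute n k a) \<and> (\<forall>b\<in>B. \<not> anticommute n k b)}"

end

theory Submission
  imports Defs
begin

text \<open>
  For a Pauli string \<open>b\<close> let \<open>N b\<close> be the number of elements of \<open>K\<close> anticommuting with \<open>b\<close>,
  i.e. \<open>card (k_sub n K {b} {})\<close>. If \<open>a \<in> K\<close> anticommutes with \<open>b\<close>, the involution of \<open>K\<close> sending \<open>k\<close> to \<open>a k\<close> when \<open>k\<close>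
  anticommutes with \<open>a\<close> (and fixing \<open>k\<close> otherwise) turns anticommutation with \<open>b\<close>
  into anticommutation with \<open>a b\<close>, so \<open>N (a b) = N b\<close>. Along a path of the
  frustration graph starting at \<open>b\<^sub>1\<close>, every vertex is, or anticommutes with, some
  \<open>c \<in> M\<close> with \<open>N c = N b\<^sub>1\<close>: through a vertex \<open>v \<in> K\<close> one of \<open>c\<close> and \<open>v c\<close> anticommutes with the next
  vertex. Hence \<open>N b\<^sub>1 = N b\<^sub>2\<close>, and removing from both sides the elements of \<open>K\<close>
  anticommuting with both \<open>b\<^sub>1\<close> and \<open>b\<^sub>2\<close> gives the claim.
\<close>

lemma odd_card_less_Suc:
  "odd (card {i. i < Suc n \<and> P i}) \<longleftrightarrow> (odd (card {i. i < n \<and> P i}) \<noteq> P n)"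
proof (cases "P n")
  case True
  then have "{i. i < Suc n \<and> P i} = insert n {i. i < n \<and> P i}" by auto
  then show ?thesis using True by simp
next
  case False
  then have "{i. i < Suc n \<and> P i} = {i. i < n \<and> P i}" using less_Suc_eq by auto
  then show ?thesis using False by simp
qed

lemma pmul_commute: "pmul x y = pmul y x"
  by (cases x; cases y) auto

lemma pmul_cancel_left: "pmul x (pmul x y) = y"
  by (cases x; cases y) auto

lemma pmul_differs_iff:
  "(pmul x y \<noteq> PI \<and> z \<noteq> PI \<and> pmul x y \<noteq> z) \<longleftrightarrow>
   ((x \<noteq> PI \<and> z \<noteq> PI \<and> x \<noteq> z) \<noteq> (y \<noteq> PI \<and> z \<noteq> PI \<and> y \<noteq> z))"
  by (cases x; cases y; cases z) auto

lemma smul_commute: "smul p q = smul q p"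
  unfolding smul_def by (simp add: pmul_commute)

lemma smul_cancel_left: "smul p (smul p q) = q"
  unfolding smul_def by (simp add: pmul_cancel_left)

lemma anticommute_sym: "anticommute n p q \<longleftrightarrow> anticommute n q p"
proof -
  have "{i. i < n \<and> p i \<noteq> PI \<and> q i \<noteq> PI \<and> p i \<noteq> q i} =
        {i. i < n \<and> q i \<noteq> PI \<and> p i \<noteq> PI \<and> q i \<noteq> p i}"
    by auto
  then show ?thesis unfolding anticommute_def by simp
qed

lemma not_anticommute_self: "\<not> anticommute n p p"
  unfolding anticommute_def by simp

lemma anticommute_smul_left:
  "anticommute n (smul p q) r \<longleftrightarrow> (anticommute n p r \<noteq> anticommute n q r)"
  unfolding anticommute_def
proof (induction n)
  case (Suc n)
  show ?case
    apply (subst odd_card_less_Suc)+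
    using Suc pmul_differs_iff[of "p n" "q n" "r n"] unfolding smul_def by auto
qed simp

lemma anticommute_smul_right:
  "anticommute n r (smul p q) \<longleftrightarrow> (anticommute n r p \<noteq> anticommute n r q)"
  using anticommute_smul_left anticommute_sym by metis

lemma finite_pauli_strings: "finite (pauli_strings n)"
proof -
  have "(UNIV :: pauli set) = {PI, PX, PY, PZ}" using pauli.exhaust by auto
  then have "finite (UNIV :: pauli set)" by (metis finite.emptyI finite_insert)
  then have "finite {p. \<forall>i. (i \<in> {..<n} \<longrightarrow> p i \<in> (UNIV :: pauli set)) \<and> (i \<notin> {..<n} \<longrightarrow> p i = PI)}"
    by (intro finite_set_of_finite_funs) auto
  then show ?thesis
    by (rule finite_subset[rotated]) (auto simp: pauli_strings_def)
qed

lemma finite_cartan_K: "pauli_cartan n K M \<Longrightarrow> finite K"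
  unfolding pauli_cartan_def using finite_pauli_strings finite_subset by blast

lemma card_k_sub_split:
  assumes "finite K"
  shows "card (k_sub n K A B) = card (k_sub n K (insert b A) B) + card (k_sub n K A (insert b B))"
proof -
  have "k_sub n K A B = k_sub n K (insert b A) B \<union> k_sub n K A (insert b B)"
    unfolding k_sub_def by auto
  moreover have "k_sub n K (insert b A) B \<inter> k_sub n K A (insert b B) = {}"
    unfolding k_sub_def by auto
  moreover have "finite (k_sub n K A' B')" for A' B'
    using assms unfolding k_sub_def by simp
  ultimately show ?thesis by (simp add: card_Un_disjoint)
qed

lemma card_k_sub_smul:
  assumes "bracket_in n K K K" and "a \<in> K" and "anticommute n a b"
  shows "card (k_sub n K {smul a b} {}) = card (k_sub n K {b} {})"
proof -
  define f where "f k = (if anticommute n a k then smul a k else k)" for k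
  have f_K: "f k \<in> K" if "k \<in> K" for k
    using that assms(1,2) unfolding f_def bracket_in_def by auto
  have f_f: "f (f k) = k" for k
    unfolding f_def
    by (simp add: anticommute_smul_right not_anticommute_self smul_cancel_left)
  have f_anticommute: "anticommute n (f k) (smul a b) \<longleftrightarrow> anticommute n k b" for k
    unfolding f_def using assms(3)
    by (simp add: anticommute_smul_left anticommute_smul_right not_anticommute_self
        anticommute_sym[of n k a])
  have f_anticommute': "anticommute n (f k) b \<longleftrightarrow> anticommute n k (smul a b)" for k
    using f_anticommute[of "f k"] by (simp add: f_f)
  have "bij_betw f (k_sub n K {b} {}) (k_sub n K {smul a b} {})"
    by (rule bij_betw_byWitness[where f' = f])
      (auto simp: k_sub_def f_K f_f f_anticommute f_anticommute')
  then show ?thesis by (simp add: bij_betw_same_card)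
qed

lemma card_k_sub_anticommuting_M:
  assumes cartan: "pauli_cartan n K M" and "b \<in> M" and "c \<in> M" and "anticommute n b c"
  shows "card (k_sub n K {c} {}) = card (k_sub n K {b} {})"
proof -
  have "bracket_in n M M K" and KK: "bracket_in n K K K"
    using cartan unfolding pauli_cartan_def by simp_all
  then have "smul b c \<in> K"
    using assms(2-4) unfolding bracket_in_def by blast
  moreover have "anticommute n (smul b c) b"
    using assms(4) by (simp add: anticommute_smul_left not_anticommute_self anticommute_sym[of n c b])
  ultimately have "card (k_sub n K {smul (smul b c) b} {}) = card (k_sub n K {b} {})"
    by (rule card_k_sub_smul[OF KK])
  moreover have "smul (smul b c) b = c"
    by (metis smul_cancel_left smul_commute)
  ultimately show ?thesis by simp
qed

lemma anticommuting_M_witness_step: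
  assumes cartan: "pauli_cartan n K M" and "c \<in> M" and "v \<in> K \<union> M"
    and "anticommute n c v" and "anticommute n v w"
  shows "\<exists>c'\<in>M. card (k_sub n K {c'} {}) = card (k_sub n K {c} {}) \<and> anticommute n c' w"
proof (cases "v \<in> M")
  case True
  then show ?thesis
    using assms card_k_sub_anticommuting_M by blast
next
  case False
  then have "v \<in> K" using assms(3) by blast
  have "anticommute n v c" using assms(4) anticommute_sym by metis
  then have "smul v c \<in> M"
    using cartan \<open>v \<in> K\<close> \<open>c \<in> M\<close> unfolding pauli_cartan_def bracket_in_def by blast
  moreover have "card (k_sub n K {smul v c} {}) = card (k_sub n K {c} {})"
    using card_k_sub_smul cartan \<open>v \<in> K\<close> \<open>anticommute n v c\<close>
    unfolding pauli_cartan_def by blast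
  moreover have "anticommute n (smul v c) w \<longleftrightarrow> \<not> anticommute n c w"
    using assms(5) by (simp add: anticommute_smul_left)
  ultimately show ?thesis using \<open>c \<in> M\<close> by metis
qed

lemma card_k_sub_eq_on_component:
  assumes cartan: "pauli_cartan n K M" and "b \<in> M" and "b' \<in> M"
    and "(frustration_edge n (K \<union> M))\<^sup>*\<^sup>* b b'"
  shows "card (k_sub n K {b'} {}) = card (k_sub n K {b} {})"
proof -
  have "\<exists>c\<in>M. card (k_sub n K {c} {}) = card (k_sub n K {b} {}) \<and> (c = v \<or> anticommute n c v)"
    if "(frustration_edge n (K \<union> M))\<^sup>*\<^sup>* b v" for v
    using that
  proof (induction rule: rtranclp_induct)
    case base
    then show ?case using \<open>b \<in> M\<close> by blast
  next
    case (step v w)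
    then obtain c where "c \<in> M" "card (k_sub n K {c} {}) = card (k_sub n K {b} {})"
      and "c = v \<or> anticommute n c v" by blast
    moreover have "v \<in> K \<union> M" "anticommute n v w"
      using step.hyps(2) unfolding frustration_edge_def by auto
    ultimately show ?case
      using anticommuting_M_witness_step[OF cartan] by metis
  qed
  then obtain c where "c \<in> M" "card (k_sub n K {c} {}) = card (k_sub n K {b} {})"
    and "c = b' \<or> anticommute n c b'"
    using assms(4) by blast
  then show ?thesis
    using card_k_sub_anticommuting_M[OF cartan] \<open>b' \<in> M\<close> by metis
qed

theorem lemmaC1:
  fixes n :: nat and K M :: "(nat \<Rightarrow> pauli) set" and b1 b2 :: "nat \<Rightarrow> pauli"
  assumes "pauli_cartan n K M"
    and "b1 \<in> M" and "b2 \<in> M" and "b1 \<noteq> b2"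
    and "\<not> anticommute n b1 b2"
    and "same_component n (K \<union> M) b1 b2"
  shows "card (k_sub n K {b1} {b2}) = card (k_sub n K {b2} {b1})"
proof -
  have "finite K" using assms(1) by (rule finite_cartan_K)
  have "card (k_sub n K {b2} {}) = card (k_sub n K {b1} {})"
    using card_k_sub_eq_on_component assms(1-3,6) unfolding same_component_def by blast
  moreover have "card (k_sub n K {b1} {}) = card (k_sub n K {b2, b1} {}) + card (k_sub n K {b1} {b2})"
    using card_k_sub_split[OF \<open>finite K\<close>] by simp
  moreover have "card (k_sub n K {b2} {}) = card (k_sub n K {b1, b2} {}) + card (k_sub n K {b2} {b1})"
    using card_k_sub_split[OF \<open>finite K\<close>] by simp
  ultimately show ?thesis by (simp add: insert_commute)
qed

end
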